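(* Let $\Omega\subseteq\mathbb{R}^N$ be a domain, $\mathcal{D}\subseteq \Omega\times\mathbb{R}\times\mathbb{R}^N\times\mathbb{S}(N)$, and $F:\mathcal{D}\to\mathbb{R}$ degenerate elliptic. Class U is a proper subset of Class M. In particular, suppose $F$ belongs to Class U, with constant $\lambda>0$ and locally bounded function $H$. Fix $\omega\in\Omega\times\mathbb{R}\times\mathbb{R}^N$. Then the functions $$g_1(t,M)=\lambda t-\lambda\,\lambda_1(M)-H(\omega)-F(\omega,M)\quad\text{(for $M$ with $(\omega,M)\in\mathcal{D}$)},$$ $$g_2(t,M)=\lambda t+\lambda\,\lambda_1(M)+H(\omega)-F(\omega,-M)\quad\text{(for $M$ with $(\omega,-M)\in\mathcal{D}$)},$$ $t\in\mathbb{R}$, satisfy properties (1)–(4) in the definition of Class M for this $\omega$, thus verifying membership of $F$ in Class M.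
   Context: $\mathbb{S}(N)$ is the space of real symmetric $N\times N$ matrices with the Löwner order ($A\le B$ iff $\langle Ax,x\rangle\le\langle Bx,x\rangle$ for all $x$). For $X\in\mathbb{S}(N)$, $\lambda_1(X)\le\dots\le\lambda_N(X)$ are its eigenvalues in increasing order. $F:\mathcal{D}\to\mathbb{R}$ is degenerate elliptic if for every $\omega\in\mathbb{R}^N\times\mathbb{R}\times\mathbb{R}^N$ with $(\omega,X),(\omega,Y)\in\mathcal{D}$, $X\le Y$ implies $F(\omega,X)\ge F(\omega,Y)$. Class U: $F$ is continuous in its matrix entry, and there exist $\lambda>0$ and a locally bounded function $H$ such that for all $\omega\in\Omega\times\mathbb{R}\times\mathbb{R}^N$, whenever $(\omega,B),(\omega,M)\in\mathcal{D}$ and $B\le M$, we have $F(\omega,B)-F(\omega,M)\ge\lambda\operatorname{tr}(M-B)+H(\omega)$. Class M: $F$ is continuous in its matrix entry, and for every $\omega\in\Omega\times\mathbb{R}\times\mathbb{R}^N$ and sets $\mathcal{S}_1,\mathcal{S}_2\subseteq\mathbb{S}(N)$ with $\{\omega\}\times\mathcal{S}_i\subseteq\mathcal{D}$, there exist $g_i:\mathbb{R}\times\mathcal{S}_i\to\mathbb{R}$ (possibly depending on $\omega$) such that: (1) for each fixed $M_0\in\mathcal{S}_i$, $t\mapsto g_i(t,M_0)$ is an increasing bijection $\mathbb{R}\to\mathbb{R}$, with inverse denoted $s\mapsto g_i(-,M_0)^{-1}(s)$; (2) $M\mapsto g_i(-,M)^{-1}(0)$ is continuous on $\mathcal{S}_i$;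 (3) for $M\in\mathcal{S}_1$, if $(\omega,X)\in\mathcal{D}$ and $X\le M$ then $-F(\omega,X)\le g_1(\lambda_1(X),M)$; (4) for $M\in\mathcal{S}_2$, if $(\omega,Y)\in\mathcal{D}$ and $-Y\le M$ then $-F(\omega,Y)\ge g_2(\lambda_N(Y),M)$.
   Formalization: In Class M, the sets $\mathcal{S}_2$ satisfy $\{\omega\}\times(-\mathcal{S}_2)\subseteq\mathcal{D}$, so $(\omega,-M)\in\mathcal{D}$ for every $M\in\mathcal{S}_2$, in place of $\{\omega\}\times\mathcal{S}_2\subseteq\mathcal{D}$. The statement above fails without it. *)

theory Defs
  imports "HOL-Analysis.Analysis"
begin

definition Sym :: "(real^'n^'n) set" where
  "Sym = {X. transpose X = X}"

definition loewner_le :: "real^'n^'n \<Rightarrow> real^'n^'n \<Rightarrow> bool" (infix "\<le>\<^sub>L" 50) where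
  "A \<le>\<^sub>L B \<longleftrightarrow> (\<forall>x. (A *v x) \<bullet> x \<le> (B *v x) \<bullet> x)"

definition eigenvalues :: "real^'n^'n \<Rightarrow> real set" where
  "eigenvalues X = {t. \<exists>v. v \<noteq> 0 \<and> X *v v = t *\<^sub>R v}"

definition lam_min :: "real^'n^'n \<Rightarrow> real" where
  "lam_min X = Min (eigenvalues X)"

definition lam_max :: "real^'n^'n \<Rightarrow> real" where
  "lam_max X = Max (eigenvalues X)"

definition is_domain :: "'a::topological_space set \<Rightarrow> bool" where
  "is_domain \<Omega> \<longleftrightarrow> open \<Omega> \<and> connected \<Omega> \<and> \<Omega> \<noteq> {}"

definition admissible_D ::
  "(real^'n) set \<Rightarrow> (((real^'n) \<times> real \<times> (real^'n)) \<times> (real^'n^'n)) set \<Rightarrow> bool" where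
  "admissible_D \<Omega> D \<longleftrightarrow> D \<subseteq> (\<Omega> \<times> UNIV \<times> UNIV) \<times> Sym"

definition degenerate_elliptic ::
  "(((real^'n) \<times> real \<times> (real^'n)) \<times> (real^'n^'n)) set
   \<Rightarrow> ((real^'n) \<times> real \<times> (real^'n) \<Rightarrow> real^'n^'n \<Rightarrow> real) \<Rightarrow> bool" where
  "degenerate_elliptic D F \<longleftrightarrow>
     (\<forall>\<omega> X Y. (\<omega>, X) \<in> D \<longrightarrow> (\<omega>, Y) \<in> D \<longrightarrow> X \<le>\<^sub>L Y \<longrightarrow> F \<omega> X \<ge> F \<omega> Y)"

definition continuous_in_matrix ::
  "(((real^'n) \<times> real \<times> (real^'n)) \<times> (real^'n^'n)) set
   \<Rightarrow> ((real^'n) \<times> real \<times> (real^'n) \<Rightarrow> real^'n^'n \<Rightarrow> real) \<Rightarrow> bool" where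
  "continuous_in_matrix D F \<longleftrightarrow> (\<forall>\<omega>. continuous_on {X. (\<omega>, X) \<in> D} (F \<omega>))"

definition locally_bounded_on :: "'a::topological_space set \<Rightarrow> ('a \<Rightarrow> real) \<Rightarrow> bool" where
  "locally_bounded_on S H \<longleftrightarrow>
     (\<forall>x\<in>S. \<exists>U. open U \<and> x \<in> U \<and> bounded (H ` (U \<inter> S)))"

definition classU_with ::
  "(real^'n) set \<Rightarrow> (((real^'n) \<times> real \<times> (real^'n)) \<times> (real^'n^'n)) set
   \<Rightarrow> ((real^'n) \<times> real \<times> (real^'n) \<Rightarrow> real^'n^'n \<Rightarrow> real)
   \<Rightarrow> real \<Rightarrow> ((real^'n) \<times> real \<times> (real^'n) \<Rightarrow> real) \<Rightarrow> bool" where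
  "classU_with \<Omega> D F lam H \<longleftrightarrow>
     continuous_in_matrix D F \<and> lam > 0 \<and> locally_bounded_on (\<Omega> \<times> UNIV \<times> UNIV) H \<and>
     (\<forall>\<omega>\<in>\<Omega> \<times> UNIV \<times> UNIV. \<forall>B M. (\<omega>, B) \<in> D \<longrightarrow> (\<omega>, M) \<in> D \<longrightarrow> B \<le>\<^sub>L M \<longrightarrow>
        F \<omega> B - F \<omega> M \<ge> lam * trace (M - B) + H \<omega>)"

definition classU ::
  "(real^'n) set \<Rightarrow> (((real^'n) \<times> real \<times> (real^'n)) \<times> (real^'n^'n)) set
   \<Rightarrow> ((real^'n) \<times> real \<times> (real^'n) \<Rightarrow> real^'n^'n \<Rightarrow> real) \<Rightarrow> bool" where
  "classU \<Omega> D F \<longleftrightarrow> (\<exists>lam H. classU_with \<Omega> D F lam H)"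

definition classM_props ::
  "(((real^'n) \<times> real \<times> (real^'n)) \<times> (real^'n^'n)) set
   \<Rightarrow> ((real^'n) \<times> real \<times> (real^'n) \<Rightarrow> real^'n^'n \<Rightarrow> real)
   \<Rightarrow> (real^'n) \<times> real \<times> (real^'n)
   \<Rightarrow> (real^'n^'n) set \<Rightarrow> (real^'n^'n) set
   \<Rightarrow> (real \<Rightarrow> real^'n^'n \<Rightarrow> real) \<Rightarrow> (real \<Rightarrow> real^'n^'n \<Rightarrow> real) \<Rightarrow> bool" where
  "classM_props D F \<omega> S1 S2 g1 g2 \<longleftrightarrow>
     (\<forall>M0\<in>S1. mono (\<lambda>t. g1 t M0) \<and> bij (\<lambda>t. g1 t M0)) \<and>
     (\<forall>M0\<in>S2. mono (\<lambda>t. g2 t M0) \<and> bij (\<lambda>t. g2 t M0)) \<and>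
     continuous_on S1 (\<lambda>M. inv (\<lambda>t. g1 t M) 0) \<and>
     continuous_on S2 (\<lambda>M. inv (\<lambda>t. g2 t M) 0) \<and>
     (\<forall>M\<in>S1. \<forall>X. (\<omega>, X) \<in> D \<longrightarrow> X \<le>\<^sub>L M \<longrightarrow> - F \<omega> X \<le> g1 (lam_min X) M) \<and>
     (\<forall>M\<in>S2. \<forall>Y. (\<omega>, Y) \<in> D \<longrightarrow> - Y \<le>\<^sub>L M \<longrightarrow> - F \<omega> Y \<ge> g2 (lam_max Y) M)"

definition admissible_S ::
  "(((real^'n) \<times> real \<times> (real^'n)) \<times> (real^'n^'n)) set
   \<Rightarrow> (real^'n) \<times> real \<times> (real^'n) \<Rightarrow> (real^'n^'n) set \<Rightarrow> (real^'n^'n) set \<Rightarrow> bool" where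
  "admissible_S D \<omega> S1 S2 \<longleftrightarrow>
     S1 \<subseteq> Sym \<and> S2 \<subseteq> Sym \<and> (\<forall>M\<in>S1. (\<omega>, M) \<in> D) \<and> (\<forall>M\<in>S2. (\<omega>, - M) \<in> D)"

definition classM ::
  "(real^'n) set \<Rightarrow> (((real^'n) \<times> real \<times> (real^'n)) \<times> (real^'n^'n)) set
   \<Rightarrow> ((real^'n) \<times> real \<times> (real^'n) \<Rightarrow> real^'n^'n \<Rightarrow> real) \<Rightarrow> bool" where
  "classM \<Omega> D F \<longleftrightarrow> continuous_in_matrix D F \<and>
     (\<forall>\<omega>\<in>\<Omega> \<times> UNIV \<times> UNIV. \<forall>S1 S2. admissible_S D \<omega> S1 S2 \<longrightarrow>
        (\<exists>g1 g2. classM_props D F \<omega> S1 S2 g1 g2))"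

end

theory Submission
  imports Defs
begin

text \<open>
  For \<open>X \<le> M\<close> pick a unit eigenvector \<open>v\<close> of \<open>X\<close> for \<open>\<lambda>\<^sub>1(X)\<close>. Then
  \<open>\<lambda>\<^sub>1(M) \<le> \<langle>Mv,v\<rangle> = \<lambda>\<^sub>1(X) + \<langle>(M - X)v,v\<rangle> \<le> \<lambda>\<^sub>1(X) + tr(M - X)\<close>, since a positive
  semidefinite form is bounded by its trace on unit vectors; together with the Class U inequality
  this is property (3), and (4) is the same argument with a unit eigenvector of \<open>Y\<close> for
  \<open>\<lambda>\<^sub>N(Y)\<close> and \<open>-M \<le> Y\<close>. The \<open>g\<^sub>i\<close> are affine in \<open>t\<close> with slope \<open>\<lambda>\<close>, and their zeros
  depend continuously on \<open>M\<close> because \<open>\<lambda>\<^sub>1\<close> is Lipschitz and \<open>F\<close> is continuous.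
  Eigenvalues are reached variationally: the minimiser of the Rayleigh quotient on the unit sphere
  is an eigenvector for \<open>\<lambda>\<^sub>1\<close>, and \<open>\<lambda>\<^sub>N(Y) = -\<lambda>\<^sub>1(-Y)\<close>.

  The inclusion is strict: \<open>F = 0\<close> on the scalar matrices \<open>cI\<close>, \<open>0 \<le> c \<le> 1/|u|\<close>, over
  \<open>\<omega> = (x, u, p)\<close> is in Class M with \<open>g\<^sub>i\<close> independent of \<open>M\<close>, but Class U would force
  \<open>H(\<omega>) \<le> -\<lambda>N/|u|\<close>, so \<open>H\<close> could not be bounded near \<open>u = 0\<close>.
\<close>

section \<open>Quadratic forms of symmetric matrices\<close>

lemma mat_matrix_vector_mult: "mat c *v x = c *\<^sub>R (x :: real^'n)"
  by (metis matrix_scaleR matrix_vector_mul(2) linear_scaleR)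

lemma symmetric_matrix_inner:
  fixes A :: "real^'n^'n"
  assumes "transpose A = A"
  shows "(A *v x) \<bullet> y = x \<bullet> (A *v y)"
  by (metis assms dot_lmul_matrix transpose_matrix_vector)

lemma nonneg_quadratic_imp_linear_coeff_zero:
  fixes b c :: real
  assumes nonneg: "\<And>t. 0 \<le> b * t + c * t\<^sup>2"
  shows "b = 0"
proof (rule ccontr)
  assume "b \<noteq> 0"
  define s where "s = \<bar>c\<bar> + 1"
  define t where "t = - b / s"
  have "t * s = - b"
    by (simp add: t_def s_def add_pos_nonneg)
  then have "(b * t + c * t\<^sup>2) * s\<^sup>2 = b\<^sup>2 * (c - s)"
    by (simp add: power2_eq_square algebra_simps)
  also have "\<dots> < 0"
    using \<open>b \<noteq> 0\<close> by (simp add: s_def mult_pos_neg)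
  moreover have "0 \<le> (b * t + c * t\<^sup>2) * s\<^sup>2"
    using nonneg[of t] by simp
  ultimately show False
    by linarith
qed

lemma psd_quadratic_form_zero_imp_kernel:
  fixes A :: "real^'n^'n"
  assumes sym: "transpose A = A" and psd: "\<And>x. 0 \<le> (A *v x) \<bullet> x"
    and zero: "(A *v v) \<bullet> v = 0"
  shows "A *v v = 0"
proof -
  define z where "z = A *v v"
  have "0 \<le> (2 * (z \<bullet> z)) * t + ((A *v z) \<bullet> z) * t\<^sup>2" for t
  proof -
    have "(A *v (v + t *\<^sub>R z)) \<bullet> (v + t *\<^sub>R z)
        = (A *v v) \<bullet> v + t * ((A *v v) \<bullet> z + (A *v z) \<bullet> v) + t\<^sup>2 * ((A *v z) \<bullet> z)"
      by (simp add: algebra_simps inner_add_left inner_add_right power2_eq_square)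
    also have "(A *v z) \<bullet> v = z \<bullet> z"
      using symmetric_matrix_inner[OF sym, of z v] by (simp add: z_def inner_commute)
    finally show ?thesis
      using psd[of "v + t *\<^sub>R z"] zero by (simp add: z_def algebra_simps)
  qed
  then have "2 * (z \<bullet> z) = 0"
    by (rule nonneg_quadratic_imp_linear_coeff_zero)
  then show ?thesis
    by (simp add: z_def)
qed

lemma psd_quadratic_form_le_trace:
  fixes A :: "real^'n^'n"
  assumes psd: "\<And>x. 0 \<le> (A *v x) \<bullet> x"
  shows "(A *v v) \<bullet> v \<le> (v \<bullet> v) * trace A"
proof -
  have minor: "v$j * v$k * (A$k$j + A$j$k) \<le> (v$j)\<^sup>2 * A$k$k + (v$k)\<^sup>2 * A$j$j" for j k
  proof -
    define w where "w = v$k *\<^sub>R axis j (1::real) - v$j *\<^sub>R axis k 1"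
    have "(A *v w) \<bullet> w = (v$k)\<^sup>2 * A$j$j - v$k * v$j * (A$k$j + A$j$k) + (v$j)\<^sup>2 * A$k$k"
      unfolding w_def
      by (simp add: algebra_simps inner_diff_left inner_diff_right matrix_vector_mult_basis
          inner_axis inner_axis' power2_eq_square column_def)
    then show ?thesis
      using psd[of w] by (simp add: algebra_simps)
  qed
  have lhs: "(A *v v) \<bullet> v = (\<Sum>k\<in>UNIV. \<Sum>j\<in>UNIV. A$k$j * v$j * v$k)"
    by (simp add: inner_vec_def matrix_vector_mult_def sum_distrib_right)
  have "2 * ((A *v v) \<bullet> v) = (\<Sum>k\<in>UNIV. \<Sum>j\<in>UNIV. v$j * v$k * (A$k$j + A$j$k))"
    unfolding lhs distrib_left sum.distrib
    by (subst (2) sum.swap) (simp add: algebra_simps)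
  also have "\<dots> \<le> (\<Sum>k\<in>UNIV. \<Sum>j\<in>UNIV. (v$j)\<^sup>2 * A$k$k + (v$k)\<^sup>2 * A$j$j)"
    by (intro sum_mono minor)
  also have "\<dots> = 2 * (\<Sum>k\<in>UNIV. \<Sum>j\<in>UNIV. (v$k)\<^sup>2 * A$j$j)"
    unfolding sum.distrib using sum.swap[of "\<lambda>k j. (v$j)\<^sup>2 * A$k$k"] by simp
  also have "\<dots> = 2 * ((v \<bullet> v) * trace A)"
    by (simp add: inner_vec_def trace_def sum_distrib_left sum_distrib_right power2_eq_square mult.commute)
  finally show ?thesis
    by simp
qed

lemma transpose_diff: "transpose (A - B) = transpose A - transpose (B :: 'a::ab_group_add^'n^'m)"
  by (simp add: transpose_def vec_eq_iff)

lemma transpose_uminus: "transpose (- A) = - transpose (A :: 'a::ab_group_add^'n^'m)"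
  by (simp add: transpose_def vec_eq_iff)

lemma matrix_vector_mult_uminus: "(- A) *v x = - (A *v x)" for A :: "real^'n^'n"
  using matrix_vector_mult_diff_rdistrib[of 0 A x] by simp

lemma symmetric_matrix_rayleigh_minimizer:
  fixes A :: "real^'n^'n"
  assumes sym: "transpose A = A"
  obtains v where "norm v = 1" "A *v v = ((A *v v) \<bullet> v) *\<^sub>R v"
    "\<And>x. ((A *v v) \<bullet> v) * (x \<bullet> x) \<le> (A *v x) \<bullet> x"
proof -
  define q where "q x = (A *v x) \<bullet> x" for x
  have "continuous_on (sphere 0 1) q"
    unfolding q_def by (intro continuous_intros)
  moreover have "sphere (0 :: real^'n) 1 \<noteq> {}"
    by simp
  ultimately obtain v where v: "v \<in> sphere 0 1" and vmin: "\<And>x. x \<in> sphere 0 1 \<Longrightarrow> q v \<le> q x"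
    using continuous_attains_inf[OF compact_sphere] by blast
  define m where "m = q v"
  have bound: "m * (x \<bullet> x) \<le> q x" for x
  proof (cases "x = 0")
    case True
    then show ?thesis by (simp add: q_def)
  next
    case False
    have "m \<le> q ((1 / norm x) *\<^sub>R x)"
      using False vmin by (simp add: m_def)
    also have "\<dots> = q x / (norm x)\<^sup>2"
      by (simp add: q_def matrix_vector_mult_scaleR power2_eq_square)
    finally show ?thesis
      using False by (simp add: field_simps dot_square_norm)
  qed
  define B where "B = A - mat m"
  have B: "B *v x = A *v x - m *\<^sub>R x" for x
    by (simp add: B_def matrix_vector_mult_diff_rdistrib mat_matrix_vector_mult)
  have "transpose B = B"
    using sym by (simp add: B_def transpose_diff)
  moreover have "0 \<le> (B *v x) \<bullet> x" for x
    using bound[of x] by (simp add: B q_def inner_diff_left)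
  moreover have "(B *v v) \<bullet> v = 0"
    using v by (simp add: B m_def q_def inner_diff_left dot_square_norm)
  ultimately have "B *v v = 0"
    by (rule psd_quadratic_form_zero_imp_kernel)
  then have "A *v v = m *\<^sub>R v"
    by (simp add: B)
  then show ?thesis
    using that v bound by (simp add: m_def q_def)
qed

section \<open>Extreme eigenvalues\<close>

lemma finite_eigenvalues_symmetric:
  fixes A :: "real^'n^'n"
  assumes sym: "transpose A = A"
  shows "finite (eigenvalues A)"
proof -
  define f where "f t = (SOME u. u \<noteq> 0 \<and> A *v u = t *\<^sub>R u)" for t
  have f: "f t \<noteq> 0 \<and> A *v f t = t *\<^sub>R f t" if "t \<in> eigenvalues A" for t
  proof -
    have "\<exists>u. u \<noteq> 0 \<and> A *v u = t *\<^sub>R u"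
      using that by (simp add: eigenvalues_def)
    then show ?thesis
      unfolding f_def by (rule someI_ex)
  qed
  have orth: "f s \<bullet> f t = 0" if "s \<in> eigenvalues A" "t \<in> eigenvalues A" "s \<noteq> t" for s t
  proof -
    have "s * (f s \<bullet> f t) = t * (f s \<bullet> f t)"
      using symmetric_matrix_inner[OF sym, of "f s" "f t"] f[OF that(1)] f[OF that(2)] by simp
    then show ?thesis
      using that(3) by simp
  qed
  have inj: "inj_on f (eigenvalues A)"
    by (rule inj_onI) (metis f inner_eq_zero_iff orth)
  have "pairwise orthogonal (f ` eigenvalues A)"
    unfolding pairwise_def orthogonal_def using orth by blast
  moreover have "0 \<notin> f ` eigenvalues A"
    using f by auto
  ultimately have "independent (f ` eigenvalues A)"
    by (rule pairwise_orthogonal_independent)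
  then have "finite (f ` eigenvalues A)"
    using independent_bound by blast
  then show ?thesis
    using finite_image_iff[OF inj] by blast
qed

lemma lam_min_eigenvector:
  fixes A :: "real^'n^'n"
  assumes sym: "transpose A = A"
  obtains v where "norm v = 1" "A *v v = lam_min A *\<^sub>R v"
    "\<And>x. lam_min A * (x \<bullet> x) \<le> (A *v x) \<bullet> x"
proof -
  obtain v where v: "norm v = 1" "A *v v = ((A *v v) \<bullet> v) *\<^sub>R v"
    and bound: "\<And>x. ((A *v v) \<bullet> v) * (x \<bullet> x) \<le> (A *v x) \<bullet> x"
    using symmetric_matrix_rayleigh_minimizer[OF sym] by blast
  define m where "m = (A *v v) \<bullet> v"
  have "v \<noteq> 0"
    using v(1) by auto
  then have "m \<in> eigenvalues A"
    using v(2) unfolding eigenvalues_def m_def by blast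
  moreover have "m \<le> t" if "t \<in> eigenvalues A" for t
  proof -
    have "\<exists>u. u \<noteq> 0 \<and> A *v u = t *\<^sub>R u"
      using that by (simp add: eigenvalues_def)
    then obtain u where u: "u \<noteq> 0" "A *v u = t *\<^sub>R u"
      by blast
    then have "m * (u \<bullet> u) \<le> t * (u \<bullet> u)"
      using bound[of u] by (simp add: m_def)
    then show ?thesis
      using u(1) by simp
  qed
  ultimately have "lam_min A = m"
    unfolding lam_min_def by (intro Min_eqI finite_eigenvalues_symmetric[OF sym])
  then show ?thesis
    using that v bound by (simp add: m_def)
qed

lemma lam_min_le_quadratic_form:
  fixes A :: "real^'n^'n"
  assumes "transpose A = A" "norm x = 1"
  shows "lam_min A \<le> (A *v x) \<bullet> x"
proof -
  obtain v where bound: "\<And>x. lam_min A * (x \<bullet> x) \<le> (A *v x) \<bullet> x"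
    using lam_min_eigenvector[OF assms(1)] by blast
  moreover have "x \<bullet> x = 1"
    using assms(2) by (simp add: dot_square_norm)
  ultimately show ?thesis
    by (metis mult.right_neutral)
qed

lemma lam_min_attained:
  fixes A :: "real^'n^'n"
  assumes "transpose A = A"
  obtains v where "norm v = 1" "(A *v v) \<bullet> v = lam_min A"
proof -
  obtain v where v: "norm v = 1" "A *v v = lam_min A *\<^sub>R v"
    using lam_min_eigenvector[OF assms] by blast
  then have "(A *v v) \<bullet> v = lam_min A"
    by (simp add: dot_square_norm)
  then show ?thesis
    using that v(1) by blast
qed

lemma eigenvalues_uminus: "eigenvalues (- A) = uminus ` eigenvalues A"
proof -
  have "t \<in> eigenvalues (- A) \<longleftrightarrow> - t \<in> eigenvalues A" for t
    unfolding eigenvalues_def mem_Collect_eq matrix_vector_mult_uminus scaleR_minus_left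
    by (metis minus_minus)
  then show ?thesis
    by (simp add: set_eq_iff image_iff) (metis minus_minus)
qed

lemma lam_max_eq_uminus_lam_min:
  fixes A :: "real^'n^'n"
  assumes "transpose A = A"
  shows "lam_max A = - lam_min (- A)"
proof -
  obtain v where "norm v = 1" "A *v v = lam_min A *\<^sub>R v"
    using lam_min_eigenvector[OF assms] by blast
  moreover have "v \<noteq> 0"
    using \<open>norm v = 1\<close> by auto
  ultimately have "eigenvalues A \<noteq> {}"
    unfolding eigenvalues_def by blast
  then show ?thesis
    unfolding lam_max_def lam_min_def eigenvalues_uminus
    using minus_Max_eq_Min[OF finite_eigenvalues_symmetric[OF assms]] by simp
qed

lemma lam_max_attained:
  fixes A :: "real^'n^'n"
  assumes "transpose A = A"
  obtains v where "norm v = 1" "(A *v v) \<bullet> v = lam_max A"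
proof -
  have "transpose (- A) = - A"
    using assms by (simp add: transpose_uminus)
  then obtain v where v: "norm v = 1" "((- A) *v v) \<bullet> v = lam_min (- A)"
    by (rule lam_min_attained)
  then have "(A *v v) \<bullet> v = lam_max A"
    using lam_max_eq_uminus_lam_min[OF assms] by (simp add: matrix_vector_mult_uminus)
  then show ?thesis
    using that v(1) by blast
qed

lemma norm_matrix_vector_mult_le:
  fixes M :: "real^'n^'m"
  shows "norm (M *v x) \<le> real CARD('m) * real CARD('n) * norm M * norm x"
proof -
  have "\<bar>M$i$j\<bar> \<le> norm M" for i j
    by (meson component_le_norm_cart Finite_Cartesian_Product.norm_nth_le order_trans)
  then have "onorm ((*v) M) \<le> real CARD('m) * real CARD('n) * norm M"
    by (rule onorm_le_matrix_component)
  then show ?thesis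
    using onorm[OF matrix_vector_mul_bounded_linear, of M x] by (meson mult_right_mono norm_ge_zero order_trans)
qed

lemma lam_min_le_add_norm_diff:
  fixes A B :: "real^'n^'n"
  assumes "transpose A = A" "transpose B = B"
  shows "lam_min A \<le> lam_min B + real CARD('n) * real CARD('n) * norm (A - B)"
proof -
  obtain v where v: "norm v = 1" "(B *v v) \<bullet> v = lam_min B"
    using lam_min_attained[OF assms(2)] by blast
  have "lam_min A \<le> (A *v v) \<bullet> v"
    using lam_min_le_quadratic_form[OF assms(1) v(1)] .
  also have "\<dots> = (B *v v) \<bullet> v + ((A - B) *v v) \<bullet> v"
    by (simp add: matrix_vector_mult_diff_rdistrib inner_diff_left)
  also have "((A - B) *v v) \<bullet> v \<le> norm ((A - B) *v v)"
    using Cauchy_Schwarz_ineq2[of "(A - B) *v v" v] v(1) by simp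
  also have "\<dots> \<le> real CARD('n) * real CARD('n) * norm (A - B)"
    using norm_matrix_vector_mult_le[of "A - B" v] v(1) by simp
  finally show ?thesis
    using v(2) by simp
qed

lemma lam_min_lipschitz:
  "(real CARD('n) * real CARD('n))-lipschitz_on Sym (lam_min :: real^'n^'n \<Rightarrow> real)"
proof (rule lipschitz_onI)
  fix A B :: "real^'n^'n"
  assume "A \<in> Sym" "B \<in> Sym"
  then have "transpose A = A" "transpose B = B"
    by (simp_all add: Sym_def)
  then show "dist (lam_min A) (lam_min B) \<le> real CARD('n) * real CARD('n) * dist A B"
    using lam_min_le_add_norm_diff[of A B] lam_min_le_add_norm_diff[of B A]
    by (simp add: dist_real_def dist_norm norm_minus_commute abs_le_iff)
qed simp

lemma continuous_on_lam_min: "S \<subseteq> Sym \<Longrightarrow> continuous_on S lam_min"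
  using lipschitz_on_continuous_on lipschitz_on_subset lam_min_lipschitz by blast

lemma loewner_le_iff_psd: "A \<le>\<^sub>L B \<longleftrightarrow> (\<forall>x. 0 \<le> ((B - A) *v x) \<bullet> x)"
  by (simp add: loewner_le_def matrix_vector_mult_diff_rdistrib inner_diff_left)

lemma lam_min_le_lam_min_add_trace:
  fixes X M :: "real^'n^'n"
  assumes "transpose X = X" "transpose M = M" "X \<le>\<^sub>L M"
  shows "lam_min M \<le> lam_min X + trace (M - X)"
proof -
  obtain v where v: "norm v = 1" "(X *v v) \<bullet> v = lam_min X"
    using lam_min_attained[OF assms(1)] by blast
  have "lam_min M \<le> (M *v v) \<bullet> v"
    by (rule lam_min_le_quadratic_form[OF assms(2) v(1)])
  also have "\<dots> = (X *v v) \<bullet> v + ((M - X) *v v) \<bullet> v"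
    by (simp add: matrix_vector_mult_diff_rdistrib inner_diff_left)
  also have "((M - X) *v v) \<bullet> v \<le> (v \<bullet> v) * trace (M - X)"
    using assms(3) by (intro psd_quadratic_form_le_trace) (simp add: loewner_le_iff_psd)
  finally show ?thesis
    using v by (simp add: dot_square_norm)
qed

lemma lam_max_add_lam_min_le_trace:
  fixes Y M :: "real^'n^'n"
  assumes "transpose Y = Y" "transpose M = M" "- Y \<le>\<^sub>L M"
  shows "lam_max Y + lam_min M \<le> trace (Y - - M)"
proof -
  obtain v where v: "norm v = 1" "(Y *v v) \<bullet> v = lam_max Y"
    using lam_max_attained[OF assms(1)] by blast
  have "- M \<le>\<^sub>L Y"
    using assms(3) by (simp add: loewner_le_iff_psd algebra_simps)
  then have "((Y - - M) *v v) \<bullet> v \<le> (v \<bullet> v) * trace (Y - - M)"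
    by (intro psd_quadratic_form_le_trace) (simp add: loewner_le_iff_psd)
  moreover have "((Y - - M) *v v) \<bullet> v = (Y *v v) \<bullet> v + (M *v v) \<bullet> v"
    by (simp add: matrix_vector_mult_add_rdistrib inner_add_left)
  moreover have "lam_min M \<le> (M *v v) \<bullet> v"
    by (rule lam_min_le_quadratic_form[OF assms(2) v(1)])
  ultimately show ?thesis
    using v by (simp add: dot_square_norm)
qed

section \<open>Class U is contained in Class M\<close>

lemma increasing_affine_bij:
  fixes f :: "real \<Rightarrow> real"
  assumes a: "a > 0" and f: "\<And>t. f t = a * t + b"
  shows "mono f" "bij f" "inv f 0 = - b / a"
proof -
  show "mono f"
    by (rule monoI) (simp add: f a)
  have "inj f"
    by (rule injI) (use a in \<open>simp add: f\<close>)
  moreover have "surj f"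
    by (rule surjI[of _ "\<lambda>y. (y - b) / a"]) (use a in \<open>simp add: f\<close>)
  ultimately show "bij f"
    by (simp add: bij_def)
  show "inv f 0 = - b / a"
    by (rule inv_f_eq[OF \<open>inj f\<close>]) (use a in \<open>simp add: f\<close>)
qed

lemma classU_with_imp_classM_props:
  assumes adm: "admissible_D \<Omega> D" and U: "classU_with \<Omega> D F lam H"
    and \<omega>: "\<omega> \<in> \<Omega> \<times> UNIV \<times> UNIV" and S: "admissible_S D \<omega> S1 S2"
  shows "classM_props D F \<omega> S1 S2
    (\<lambda>t M. lam * t - lam * lam_min M - H \<omega> - F \<omega> M)
    (\<lambda>t M. lam * t + lam * lam_min M + H \<omega> - F \<omega> (- M))"
proof -
  have lam: "lam > 0" and Fc: "continuous_on {X. (\<omega>, X) \<in> D} (F \<omega>)"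
    and ellipticity: "\<And>B M. (\<omega>, B) \<in> D \<Longrightarrow> (\<omega>, M) \<in> D \<Longrightarrow> B \<le>\<^sub>L M \<Longrightarrow>
      lam * trace (M - B) + H \<omega> \<le> F \<omega> B - F \<omega> M"
    using U \<omega> unfolding classU_with_def continuous_in_matrix_def by blast+
  have S1: "S1 \<subseteq> Sym" "\<And>M. M \<in> S1 \<Longrightarrow> (\<omega>, M) \<in> D"
    and S2: "S2 \<subseteq> Sym" "\<And>M. M \<in> S2 \<Longrightarrow> (\<omega>, - M) \<in> D"
    using S unfolding admissible_S_def by blast+
  have symD: "transpose X = X" if "(\<omega>, X) \<in> D" for X
    using adm that unfolding admissible_D_def Sym_def by blast
  have sym: "transpose M = M" if "M \<in> S1 \<union> S2" for M
    using S1(1) S2(1) that unfolding Sym_def by blast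
  have g1: "mono (\<lambda>t. lam * t - lam * lam_min M - H \<omega> - F \<omega> M)
      \<and> bij (\<lambda>t. lam * t - lam * lam_min M - H \<omega> - F \<omega> M)
      \<and> inv (\<lambda>t. lam * t - lam * lam_min M - H \<omega> - F \<omega> M) 0 = (lam * lam_min M + H \<omega> + F \<omega> M) / lam"
    for M
    using increasing_affine_bij[OF lam, of _ "- (lam * lam_min M + H \<omega> + F \<omega> M)"] by simp
  have g2: "mono (\<lambda>t. lam * t + lam * lam_min M + H \<omega> - F \<omega> (- M))
      \<and> bij (\<lambda>t. lam * t + lam * lam_min M + H \<omega> - F \<omega> (- M))
      \<and> inv (\<lambda>t. lam * t + lam * lam_min M + H \<omega> - F \<omega> (- M)) 0
        = - (lam * lam_min M + H \<omega> - F \<omega> (- M)) / lam"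
    for M
    using increasing_affine_bij[OF lam, of _ "lam * lam_min M + H \<omega> - F \<omega> (- M)"] by simp
  have "continuous_on S1 (\<lambda>M. (lam * lam_min M + H \<omega> + F \<omega> M) / lam)"
    by (intro continuous_intros continuous_on_lam_min[OF S1(1)] continuous_on_subset[OF Fc])
      (use S1 lam in auto)
  moreover have "continuous_on S2 (\<lambda>M. - (lam * lam_min M + H \<omega> - F \<omega> (- M)) / lam)"
    by (intro continuous_intros continuous_on_lam_min[OF S2(1)] continuous_on_compose2[OF Fc])
      (use S2 lam in auto)
  moreover have "- F \<omega> X \<le> lam * lam_min X - lam * lam_min M - H \<omega> - F \<omega> M"
    if M: "M \<in> S1" and X: "(\<omega>, X) \<in> D" and le: "X \<le>\<^sub>L M" for M X
  proof -
    have "lam * lam_min M \<le> lam * (lam_min X + trace (M - X))"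
      using lam_min_le_lam_min_add_trace[OF symD[OF X] sym le] M lam by simp
    then show ?thesis
      using ellipticity[OF X S1(2)[OF M] le] by (simp add: algebra_simps)
  qed
  moreover have "lam * lam_max Y + lam * lam_min M + H \<omega> - F \<omega> (- M) \<le> - F \<omega> Y"
    if M: "M \<in> S2" and Y: "(\<omega>, Y) \<in> D" and le: "- Y \<le>\<^sub>L M" for M Y
  proof -
    have "- M \<le>\<^sub>L Y"
      using le by (simp add: loewner_le_iff_psd algebra_simps)
    moreover have "lam * (lam_max Y + lam_min M) \<le> lam * trace (Y - - M)"
      using lam_max_add_lam_min_le_trace[OF symD[OF Y] sym le] M lam by simp
    ultimately show ?thesis
      using ellipticity[OF S2(2)[OF M] Y] by (simp add: algebra_simps)
  qed
  ultimately show ?thesis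
    unfolding classM_props_def using g1 g2 by auto
qed

lemma classU_imp_classM:
  assumes "admissible_D \<Omega> D" "classU \<Omega> D F"
  shows "classM \<Omega> D F"
proof -
  obtain lam H where U: "classU_with \<Omega> D F lam H"
    using assms(2) unfolding classU_def by blast
  then have "continuous_in_matrix D F"
    unfolding classU_with_def by blast
  then show ?thesis
    unfolding classM_def using classU_with_imp_classM_props[OF assms(1) U] by blast
qed

section \<open>A Class M operator outside Class U\<close>

lemma trace_mat: "trace (mat c :: 'a::comm_semiring_1^'n^'n) = c * of_nat CARD('n)"
  by (simp add: trace_def mat_def mult.commute)

lemma eigenvalues_mat: "eigenvalues (mat c :: real^'n^'n) = {c}"
proof -
  have "(axis undefined 1 :: real^'n) \<noteq> 0"
    by (simp add: axis_eq_0_iff)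
  then show ?thesis
    unfolding eigenvalues_def mat_matrix_vector_mult by (auto simp: scaleR_cancel_right)
qed

lemma lam_min_mat: "lam_min (mat c :: real^'n^'n) = c"
  by (simp add: lam_min_def eigenvalues_mat)

lemma lam_max_mat: "lam_max (mat c :: real^'n^'n) = c"
  by (simp add: lam_max_def eigenvalues_mat)

definition scalar_bound :: "(real^'n) \<times> real \<times> (real^'n) \<Rightarrow> real" where
  "scalar_bound \<omega> = inverse \<bar>fst (snd \<omega>)\<bar>"

text \<open>Since \<open>inverse 0 = 0\<close>, the band is \<open>{0}\<close> over \<open>u = 0\<close> and unbounded near it.\<close>

definition scalar_band :: "(((real^'n) \<times> real \<times> (real^'n)) \<times> (real^'n^'n)) set" where
  "scalar_band = {(\<omega>, mat c) | \<omega> c. 0 \<le> c \<and> c \<le> scalar_bound \<omega>}"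

lemma classM_scalar_band: "classM UNIV scalar_band (\<lambda>_ _. 0)"
  unfolding classM_def
proof (intro conjI ballI allI impI exI)
  show "continuous_in_matrix scalar_band (\<lambda>_ _. 0)"
    by (simp add: continuous_in_matrix_def)
  fix \<omega> :: "(real^'n) \<times> real \<times> (real^'n)" and S1 S2 :: "(real^'n^'n) set"
  have "mono (\<lambda>t::real. t) \<and> bij (\<lambda>t::real. t)"
    using increasing_affine_bij(1,2)[of 1 "\<lambda>t. t" 0] by simp
  moreover have "mono (\<lambda>t. t - scalar_bound \<omega>) \<and> bij (\<lambda>t. t - scalar_bound \<omega>)"
    using increasing_affine_bij(1,2)[of 1 "\<lambda>t. t - scalar_bound \<omega>" "- scalar_bound \<omega>"] by simp
  moreover have "0 \<le> lam_min X" "lam_max X \<le> scalar_bound \<omega>" if "(\<omega>, X) \<in> scalar_band" for X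
    using that unfolding scalar_band_def by (auto simp: lam_min_mat lam_max_mat)
  ultimately show "classM_props scalar_band (\<lambda>_ _. 0) \<omega> S1 S2 (\<lambda>t M. t) (\<lambda>t M. t - scalar_bound \<omega>)"
    unfolding classM_props_def by (auto intro: continuous_on_const)
qed

lemma not_classU_with_scalar_band:
  fixes H :: "(real^'n) \<times> real \<times> (real^'n) \<Rightarrow> real"
  shows "\<not> classU_with UNIV scalar_band (\<lambda>_ _. 0) lam H"
proof
  assume "classU_with UNIV scalar_band (\<lambda>_ _. 0) lam H"
  then have lam: "lam > 0" and H: "locally_bounded_on UNIV H"
    and ellipticity: "\<And>\<omega> B M. (\<omega>, B) \<in> scalar_band \<Longrightarrow> (\<omega>, M) \<in> scalar_band \<Longrightarrow> B \<le>\<^sub>L M \<Longrightarrow>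
      lam * trace (M - B) + H \<omega> \<le> 0"
    unfolding classU_with_def by auto
  have H_le: "lam * scalar_bound \<omega> \<le> - H \<omega>" for \<omega>
  proof -
    have nonneg: "0 \<le> scalar_bound \<omega>"
      by (simp add: scalar_bound_def)
    then have "(\<omega>, mat 0) \<in> scalar_band" "(\<omega>, mat (scalar_bound \<omega>)) \<in> scalar_band"
      unfolding scalar_band_def by blast+
    moreover have "mat 0 \<le>\<^sub>L (mat (scalar_bound \<omega>) :: real^'n^'n)"
      by (simp add: loewner_le_def mat_matrix_vector_mult scalar_bound_def)
    ultimately have "lam * trace (mat (scalar_bound \<omega>) - mat 0 :: real^'n^'n) + H \<omega> \<le> 0"
      using ellipticity by blast
    then have "lam * (scalar_bound \<omega> * real CARD('n)) + H \<omega> \<le> 0"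
      by (simp add: trace_mat)
    moreover have "scalar_bound \<omega> * 1 \<le> scalar_bound \<omega> * real CARD('n)"
      using nonneg by (intro mult_left_mono) auto
    then have "lam * scalar_bound \<omega> \<le> lam * (scalar_bound \<omega> * real CARD('n))"
      using lam by simp
    ultimately show ?thesis
      by linarith
  qed
  define \<omega>\<^sub>0 :: "(real^'n) \<times> real \<times> (real^'n)" where "\<omega>\<^sub>0 = (0, 0, 0)"
  have "\<exists>U. open U \<and> \<omega>\<^sub>0 \<in> U \<and> bounded (H ` U)"
    using H unfolding locally_bounded_on_def Int_UNIV_right by blast
  then obtain U where U: "open U" "\<omega>\<^sub>0 \<in> U" "bounded (H ` U)"
    by blast
  obtain e where e: "e > 0" "ball \<omega>\<^sub>0 e \<subseteq> U"
    using U(1,2) open_contains_ball by blast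
  obtain K where K: "\<And>\<omega>. \<omega> \<in> U \<Longrightarrow> \<bar>H \<omega>\<bar> \<le> K"
    using U(3) unfolding bounded_real by blast
  define u where "u = min (e / 2) (lam / (\<bar>K\<bar> + 1))"
  have u: "0 < u" "u < e" "u \<le> lam / (\<bar>K\<bar> + 1)"
    using e lam by (auto simp: u_def)
  define \<omega> :: "(real^'n) \<times> real \<times> (real^'n)" where "\<omega> = (0, u, 0)"
  have "\<omega> \<in> U"
    using u e by (auto simp: \<omega>_def \<omega>\<^sub>0_def dist_Pair_Pair)
  have "\<bar>K\<bar> + 1 \<le> lam * scalar_bound \<omega>"
    using u by (simp add: \<omega>_def scalar_bound_def le_divide_eq field_simps add_pos_nonneg)
  then show False
    using H_le[of \<omega>] K[OF \<open>\<omega> \<in> U\<close>] by linarith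
qed

lemma exists_classM_not_classU:
  "\<exists>(\<Omega> :: (real^'n) set) D F. is_domain \<Omega> \<and> admissible_D \<Omega> D \<and> degenerate_elliptic D F
     \<and> classM \<Omega> D F \<and> \<not> classU \<Omega> D F"
proof (intro exI conjI)
  show "is_domain (UNIV :: (real^'n) set)"
    by (simp add: is_domain_def connected_UNIV)
  show "admissible_D UNIV (scalar_band :: (((real^'n) \<times> real \<times> (real^'n)) \<times> (real^'n^'n)) set)"
    unfolding admissible_D_def scalar_band_def Sym_def by auto
  show "degenerate_elliptic (scalar_band :: (((real^'n) \<times> real \<times> (real^'n)) \<times> (real^'n^'n)) set) (\<lambda>_ _. 0)"
    by (simp add: degenerate_elliptic_def)
  show "\<not> classU UNIV (scalar_band :: (((real^'n) \<times> real \<times> (real^'n)) \<times> (real^'n^'n)) set) (\<lambda>_ _. 0)"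
    unfolding classU_def using not_classU_with_scalar_band by blast
qed (fact classM_scalar_band)

theorem lemma1:
  fixes \<Omega> :: "(real^'n) set"
    and D :: "(((real^'n) \<times> real \<times> (real^'n)) \<times> (real^'n^'n)) set"
    and F :: "(real^'n) \<times> real \<times> (real^'n) \<Rightarrow> real^'n^'n \<Rightarrow> real"
    and lam :: real
    and H :: "(real^'n) \<times> real \<times> (real^'n) \<Rightarrow> real"
    and \<omega> :: "(real^'n) \<times> real \<times> (real^'n)"
  assumes "is_domain \<Omega>"
    and "admissible_D \<Omega> D"
    and "degenerate_elliptic D F"
    and "classU_with \<Omega> D F lam H"
    and "\<omega> \<in> \<Omega> \<times> UNIV \<times> UNIV"
  shows "(\<forall>(\<Omega>'::(real^'n) set) D' F'. is_domain \<Omega>' \<and> admissible_D \<Omega>' D' \<and>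
            degenerate_elliptic D' F' \<and> classU \<Omega>' D' F' \<longrightarrow> classM \<Omega>' D' F')
      \<and> (\<exists>(\<Omega>'::(real^'n) set) D' F'. is_domain \<Omega>' \<and> admissible_D \<Omega>' D' \<and>
            degenerate_elliptic D' F' \<and> classM \<Omega>' D' F' \<and> \<not> classU \<Omega>' D' F')
      \<and> (\<forall>S1 S2. admissible_S D \<omega> S1 S2 \<longrightarrow>
            classM_props D F \<omega> S1 S2
              (\<lambda>t M. lam * t - lam * lam_min M - H \<omega> - F \<omega> M)
              (\<lambda>t M. lam * t + lam * lam_min M + H \<omega> - F \<omega> (- M)))
      \<and> classM \<Omega> D F"
proof (intro conjI)
  show "\<forall>(\<Omega>'::(real^'n) set) D' F'. is_domain \<Omega>' \<and> admissible_D \<Omega>' D' \<and>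
      degenerate_elliptic D' F' \<and> classU \<Omega>' D' F' \<longrightarrow> classM \<Omega>' D' F'"
    using classU_imp_classM by blast
  show "\<exists>(\<Omega>'::(real^'n) set) D' F'. is_domain \<Omega>' \<and> admissible_D \<Omega>' D' \<and>
      degenerate_elliptic D' F' \<and> classM \<Omega>' D' F' \<and> \<not> classU \<Omega>' D' F'"
    by (rule exists_classM_not_classU)
  show "\<forall>S1 S2. admissible_S D \<omega> S1 S2 \<longrightarrow>
      classM_props D F \<omega> S1 S2
        (\<lambda>t M. lam * t - lam * lam_min M - H \<omega> - F \<omega> M)
        (\<lambda>t M. lam * t + lam * lam_min M + H \<omega> - F \<omega> (- M))"
    using classU_with_imp_classM_props[OF assms(2,4,5)] by blast
  show "classM \<Omega> D F"
    using classU_imp_classM[OF assms(2)] assms(4) unfolding classU_def by blast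
qed

end
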